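(* Let $\ell$ be a positive integer and $L\ge2$. For every $(p,n,\ell)$-simple-labelling $\tilde M$ of an $L$-graph, $\tilde\Delta(\tilde M)\ge0$.
   Context: An $L$-graph is a cycle with $2L$ vertices and $2L$ edges whose vertices alternate between $n$-vertices and $p$-vertices. A $(p,n,\ell)$-simple-labelling assigns an $n$-label in $[n]$ to each $n$-vertex and to each $p$-vertex either an $\ell$-tuple of elements of $[p]$ or the empty label $\emptyset$, such that: (i) $n$-labels of adjacent $n$-vertices (consecutive $n$-vertices along the cycle, separated by one $p$-vertex) are distinct; (ii) the $p$-labels in an $\ell$-tuple are distinct; (iii) for each $n$-label $i$ and $p$-label $j$, the number of edges whose $n$-endpoint is labelled $i$ and whose $p$-endpoint's tuple contains $j$ is even; (iv) for any two $n$-labels $i,i'$, the number of occurrences of three consecutive vertices labelled $i,\emptyset,i'$ equals the number of occurrences of three consecutive vertices labelled $i',\emptyset,i$. Let $\tilde k$ be the number of $p$-vertices with non-empty label, $\tilde r$ the number of distinct $n$-labels and $\tilde c$ the number of distinct $p$-labels. The excess is $\tilde\Delta(\tilde M)=\frac{L+\tilde k}2+1-\tilde r-\frac{\tilde c}{\ell}$. *)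

theory Defs
  imports Complex_Main
begin

text \<open>An L-graph: cycle a_0, b_0, a_1, b_1, ..., a_{L-1}, b_{L-1}, (back to a_0),
  where a_t (t < L) are the n-vertices and b_t (t < L) are the p-vertices.
  Edges: {a_t, b_t} and {b_t, a_{(t+1) mod L}} for t < L (2L edges).
  A labelling is given by nl :: nat => nat (n-label of a_t) and
  pl :: nat => nat list option (p-label of b_t; None is the empty label,
  Some xs an ell-tuple).\<close>

definition plab_contains :: "nat list option \<Rightarrow> nat \<Rightarrow> bool" where
  "plab_contains x j = (case x of None \<Rightarrow> False | Some xs \<Rightarrow> j \<in> set xs)"

definition simple_labelling ::
  "nat \<Rightarrow> nat \<Rightarrow> nat \<Rightarrow> nat \<Rightarrow> (nat \<Rightarrow> nat) \<Rightarrow> (nat \<Rightarrow> nat list option) \<Rightarrow> bool" where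
  "simple_labelling p n ell L nl pl \<longleftrightarrow>
     (\<forall>t<L. nl t \<in> {1..n}) \<and>
     (\<forall>t<L. case pl t of None \<Rightarrow> True
              | Some xs \<Rightarrow> length xs = ell \<and> set xs \<subseteq> {1..p}) \<and>
     \<comment> \<open>(i) adjacent n-vertices have distinct labels\<close>
     (\<forall>t<L. nl t \<noteq> nl ((t + 1) mod L)) \<and>
     \<comment> \<open>(ii) entries of a tuple are distinct\<close>
     (\<forall>t<L. case pl t of None \<Rightarrow> True | Some xs \<Rightarrow> distinct xs) \<and>
     \<comment> \<open>(iii) parity condition on edges\<close>
     (\<forall>i j. even (card {t. t < L \<and> nl t = i \<and> plab_contains (pl t) j}
                 + card {t. t < L \<and> nl ((t + 1) mod L) = i \<and> plab_contains (pl t) j})) \<and>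
     \<comment> \<open>(iv) i, empty, i' occurs as often as i', empty, i\<close>
     (\<forall>i i'. card {t. t < L \<and> nl t = i \<and> pl t = None \<and> nl ((t + 1) mod L) = i'}
           = card {t. t < L \<and> nl t = i' \<and> pl t = None \<and> nl ((t + 1) mod L) = i})"

definition k_tilde :: "nat \<Rightarrow> (nat \<Rightarrow> nat list option) \<Rightarrow> nat" where
  "k_tilde L pl = card {t. t < L \<and> pl t \<noteq> None}"

definition r_tilde :: "nat \<Rightarrow> (nat \<Rightarrow> nat) \<Rightarrow> nat" where
  "r_tilde L nl = card (nl ` {..<L})"

definition c_tilde :: "nat \<Rightarrow> (nat \<Rightarrow> nat list option) \<Rightarrow> nat" where
  "c_tilde L pl = card {j. \<exists>t<L. plab_contains (pl t) j}"

definition excess :: "nat \<Rightarrow> nat \<Rightarrow> (nat \<Rightarrow> nat) \<Rightarrow> (nat \<Rightarrow> nat list option) \<Rightarrow> real" where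
  "excess ell L nl pl = (real L + real (k_tilde L pl)) / 2 + 1 - real (r_tilde L nl)
      - real (c_tilde L pl) / real ell"

end

theory Submission
  imports Defs
begin

text \<open>Walk once around the cycle and call a step t fresh if it leads from a_t to an n-label not
  seen among a_0, ..., a_t; then r is at most one more than the number of fresh steps.
  By the parity condition (iii), every p-label occurs at some non-fresh step: at the last step
  carrying it, a fresh step would be the only edge joining that p-label to the newly reached
  n-label. Hence c/ell is at most the number of non-fresh non-empty steps. By the symmetry
  condition (iv), each fresh empty step i, \<emptyset>, i' is matched with a reverse step
  i', \<emptyset>, i, which comes later and is not fresh; so at most half of the empty steps are
  fresh. Adding up, r + c/ell \<le> (L + k)/2 + 1.\<close>

definition fresh_steps :: "nat \<Rightarrow> (nat \<Rightarrow> nat) \<Rightarrow> nat set" where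
  "fresh_steps L nl = {t. t < L \<and> nl ((t + 1) mod L) \<notin> nl ` {..t}}"

lemma fresh_steps_subset: "fresh_steps L nl \<subseteq> {..<L}"
  by (auto simp: fresh_steps_def)

lemma fresh_steps_Suc_less:
  assumes "t \<in> fresh_steps L nl"
  shows "Suc t < L"
proof (rule ccontr)
  assume "\<not> Suc t < L"
  with assms have "Suc t = L"
    by (simp add: fresh_steps_def)
  then have "(t + 1) mod L = 0"
    by simp
  with assms show False
    by (auto simp: fresh_steps_def)
qed

lemma fresh_steps_fresh:
  assumes "t \<in> fresh_steps L nl"
  shows "nl (Suc t) \<notin> nl ` {..t}"
  using assms fresh_steps_Suc_less[OF assms] by (simp add: fresh_steps_def)

lemma inj_on_fresh_steps: "inj_on (\<lambda>t. nl (Suc t)) (fresh_steps L nl)"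
proof (rule inj_onI, rule ccontr)
  fix t1 t2
  assume fresh: "t1 \<in> fresh_steps L nl" "t2 \<in> fresh_steps L nl"
    and eq: "nl (Suc t1) = nl (Suc t2)" and "t1 \<noteq> t2"
  then consider "t1 < t2" | "t2 < t1" by linarith
  then show False
  proof cases
    case 1
    then have "nl (Suc t1) \<in> nl ` {..t2}" by simp
    with fresh_steps_fresh[OF fresh(2)] eq show False by simp
  next
    case 2
    then have "nl (Suc t2) \<in> nl ` {..t1}" by simp
    with fresh_steps_fresh[OF fresh(1)] eq show False by simp
  qed
qed

lemma card_image_le_card_fresh_steps: "card (nl ` {..<L}) \<le> card (fresh_steps L nl) + 1"
proof -
  have "nl ` {..<L} \<subseteq> insert (nl 0) ((\<lambda>t. nl (Suc t)) ` fresh_steps L nl)"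
  proof
    fix x
    assume "x \<in> nl ` {..<L}"
    then have "\<exists>s. s < L \<and> nl s = x" by auto
    then obtain s where s: "s < L" "nl s = x" and first: "\<And>u. u < s \<Longrightarrow> nl u \<noteq> x"
      by (auto simp: exists_least_iff[of "\<lambda>s. s < L \<and> nl s = x"])
    show "x \<in> insert (nl 0) ((\<lambda>t. nl (Suc t)) ` fresh_steps L nl)"
    proof (cases s)
      case 0
      then show ?thesis using s by simp
    next
      case (Suc t)
      have "nl u \<noteq> nl (Suc t)" if "u \<le> t" for u
        using first[of u] that s Suc by simp
      then have "nl (Suc t) \<notin> nl ` {..t}" by fastforce
      with Suc s have "t \<in> fresh_steps L nl"
        by (simp add: fresh_steps_def)
      with Suc s show ?thesis by auto
    qed
  qed
  then have "card (nl ` {..<L}) \<le> card (insert (nl 0) ((\<lambda>t. nl (Suc t)) ` fresh_steps L nl))"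
    by (rule card_mono[rotated]) (simp add: fresh_steps_def)
  also have "\<dots> \<le> card ((\<lambda>t. nl (Suc t)) ` fresh_steps L nl) + 1"
    by (simp add: card_insert_le_m1)
  also have "\<dots> \<le> card (fresh_steps L nl) + 1"
    by (simp add: card_image_le fresh_steps_def)
  finally show ?thesis .
qed

lemma even_incidences_imp_non_fresh_step:
  assumes even: "\<And>v. even (card {s. s < L \<and> nl s = v \<and> P s}
                           + card {s. s < L \<and> nl ((s + 1) mod L) = v \<and> P s})"
    and "t < L" "P t"
  shows "\<exists>s<L. P s \<and> s \<notin> fresh_steps L nl"
proof (rule ccontr)
  assume "\<not> ?thesis"
  then have all_fresh: "s \<in> fresh_steps L nl" if "s < L" "P s" for s
    using that by blast
  define T where "T = {s. s < L \<and> P s}"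
  define m where "m = Max T"
  have "finite T" "t \<in> T"
    by (simp_all add: T_def assms)
  then have "m \<in> T" and last: "\<And>s. s < L \<Longrightarrow> P s \<Longrightarrow> s \<le> m"
    unfolding m_def by (auto intro: Max_in) (simp add: T_def)
  then have m: "m < L" "P m"
    by (simp_all add: T_def)
  then have m_fresh: "m \<in> fresh_steps L nl"
    by (rule all_fresh)
  define v where "v = nl (Suc m)"
  have new: "v \<notin> nl ` {..m}"
    unfolding v_def by (rule fresh_steps_fresh[OF m_fresh])
  have no_head: "{s. s < L \<and> nl s = v \<and> P s} = {}"
    using last new by fastforce
  have single_tail: "{s. s < L \<and> nl ((s + 1) mod L) = v \<and> P s} = {m}"
  proof -
    have "s = m" if "s < L" "nl ((s + 1) mod L) = v" "P s" for s
    proof (rule ccontr)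
      assume "s \<noteq> m"
      with last that have "Suc s \<le> m" by force
      moreover have "nl (Suc s) = v"
        using that fresh_steps_Suc_less[OF all_fresh[OF that(1,3)]] by simp
      ultimately show False
        using new by auto
    qed
    moreover have "nl ((m + 1) mod L) = v"
      using fresh_steps_Suc_less[OF m_fresh] by (simp add: v_def)
    ultimately show ?thesis
      using m by blast
  qed
  show False
    using even[of v] unfolding no_head single_tail by simp
qed

lemma card_fresh_steps_Int_le_Diff:
  assumes reversal: "\<And>i i'. card {t. t < L \<and> nl t = i \<and> Q t \<and> nl ((t + 1) mod L) = i'}
                            = card {t. t < L \<and> nl t = i' \<and> Q t \<and> nl ((t + 1) mod L) = i}"
  shows "card (fresh_steps L nl \<inter> {t. t < L \<and> Q t})
           \<le> card ({t. t < L \<and> Q t} - fresh_steps L nl)"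
proof -
  let ?A = "fresh_steps L nl \<inter> {t. t < L \<and> Q t}"
  have "\<exists>s. s < L \<and> nl s = nl (Suc t) \<and> Q s \<and> nl ((s + 1) mod L) = nl t" if "t \<in> ?A" for t
  proof -
    have "Suc t < L"
      using that fresh_steps_Suc_less by blast
    with that have "t \<in> {s. s < L \<and> nl s = nl t \<and> Q s \<and> nl ((s + 1) mod L) = nl (Suc t)}"
      by simp
    then have "card {s. s < L \<and> nl s = nl t \<and> Q s \<and> nl ((s + 1) mod L) = nl (Suc t)} > 0"
      by (auto simp: card_gt_0_iff)
    then have "card {s. s < L \<and> nl s = nl (Suc t) \<and> Q s \<and> nl ((s + 1) mod L) = nl t} > 0"
      by (simp only: reversal)
    then show ?thesis
      by (auto simp: card_gt_0_iff)
  qed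
  then obtain g where g: "\<And>t. t \<in> ?A \<Longrightarrow>
      g t < L \<and> nl (g t) = nl (Suc t) \<and> Q (g t) \<and> nl ((g t + 1) mod L) = nl t"
    by metis
  have "inj_on g ?A"
  proof (rule inj_onI)
    fix t1 t2
    assume "t1 \<in> ?A" "t2 \<in> ?A" "g t1 = g t2"
    with g have "nl (Suc t1) = nl (Suc t2)" by metis
    with \<open>t1 \<in> ?A\<close> \<open>t2 \<in> ?A\<close> show "t1 = t2"
      using inj_on_fresh_steps[of nl L] by (auto dest: inj_onD)
  qed
  moreover have "g ` ?A \<subseteq> {t. t < L \<and> Q t} - fresh_steps L nl"
  proof (rule image_subsetI)
    fix t
    assume t: "t \<in> ?A"
    have "t < g t"
      using fresh_steps_fresh[of t] t g[OF t] by (metis IntD1 atMost_iff image_eqI not_less)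
    then have "nl ((g t + 1) mod L) \<in> nl ` {..g t}"
      using g[OF t] by auto
    then have "g t \<notin> fresh_steps L nl"
      by (simp add: fresh_steps_def)
    with g[OF t] show "g t \<in> {t. t < L \<and> Q t} - fresh_steps L nl"
      by simp
  qed
  ultimately show ?thesis
    by (rule card_inj_on_le) simp
qed

lemma Collect_plab_contains: "{j. plab_contains x j} = (case x of None \<Rightarrow> {} | Some xs \<Rightarrow> set xs)"
  by (auto simp: plab_contains_def split: option.split)

lemma c_tilde_le_card_non_fresh:
  assumes lengths: "\<And>t xs. t < L \<Longrightarrow> pl t = Some xs \<Longrightarrow> length xs \<le> ell"
    and parity: "\<And>i j. even (card {t. t < L \<and> nl t = i \<and> plab_contains (pl t) j}
                 + card {t. t < L \<and> nl ((t + 1) mod L) = i \<and> plab_contains (pl t) j})"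
  shows "c_tilde L pl \<le> ell * card ({t. t < L \<and> pl t \<noteq> None} - fresh_steps L nl)"
proof -
  let ?S = "{t. t < L \<and> pl t \<noteq> None} - fresh_steps L nl"
  have "{j. \<exists>t<L. plab_contains (pl t) j} \<subseteq> (\<Union>t\<in>?S. {j. plab_contains (pl t) j})"
  proof
    fix j
    assume "j \<in> {j. \<exists>t<L. plab_contains (pl t) j}"
    then obtain t where "t < L" "plab_contains (pl t) j"
      by blast
    then obtain s where "s < L" "plab_contains (pl s) j" "s \<notin> fresh_steps L nl"
      using even_incidences_imp_non_fresh_step[OF parity] by blast
    then have "s \<in> ?S" "j \<in> {j. plab_contains (pl s) j}"
      by (auto simp: plab_contains_def split: option.split_asm)
    then show "j \<in> (\<Union>t\<in>?S. {j. plab_contains (pl t) j})"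
      by blast
  qed
  then have "c_tilde L pl \<le> card (\<Union>t\<in>?S. {j. plab_contains (pl t) j})"
    unfolding c_tilde_def by (rule card_mono[rotated]) (auto simp: Collect_plab_contains split: option.split)
  also have "\<dots> \<le> (\<Sum>t\<in>?S. card {j. plab_contains (pl t) j})"
    by (rule card_UN_le) simp
  also have "\<dots> \<le> (\<Sum>t\<in>?S. ell)"
    by (rule sum_mono) (auto simp: Collect_plab_contains intro: le_trans[OF card_length lengths])
  finally show ?thesis
    by (simp add: mult.commute)
qed

lemma card_add_card_Diff_le_half:
  assumes "finite E" "finite N" "E \<inter> N = {}" "F \<subseteq> E \<union> N"
    and "card (F \<inter> E) \<le> card (E - F)"
  shows "2 * card F + 2 * card (N - F) \<le> card E + 2 * card N"
proof -
  have "card E = card (F \<inter> E) + card (E - F)"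
    using card_Int_Diff[OF assms(1), of F] by (simp add: Int_commute)
  moreover have "card N = card (F \<inter> N) + card (N - F)"
    using card_Int_Diff[OF assms(2), of F] by (simp add: Int_commute)
  moreover have "card F = card (F \<inter> E) + card (F \<inter> N)"
  proof -
    have "F = (F \<inter> E) \<union> (F \<inter> N)" "(F \<inter> E) \<inter> (F \<inter> N) = {}"
      using assms(3,4) by blast+
    with assms(1,2) show ?thesis
      by (metis card_Un_disjoint finite_Int)
  qed
  ultimately show ?thesis
    using assms(5) by linarith
qed

theorem lemma3p13:
  fixes p n ell L :: nat and nl :: "nat \<Rightarrow> nat" and pl :: "nat \<Rightarrow> nat list option"
  assumes "ell \<ge> 1" and "L \<ge> 2"
    and "simple_labelling p n ell L nl pl"
  shows "excess ell L nl pl \<ge> 0"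
proof -
  define F where "F = fresh_steps L nl"
  define N where "N = {t. t < L \<and> pl t \<noteq> None}"
  define E where "E = {t. t < L \<and> pl t = None}"
  have lengths: "\<And>t xs. t < L \<Longrightarrow> pl t = Some xs \<Longrightarrow> length xs \<le> ell"
    using assms(3) unfolding simple_labelling_def by fastforce
  have r: "r_tilde L nl \<le> card F + 1"
    unfolding r_tilde_def F_def by (rule card_image_le_card_fresh_steps)
  have "c_tilde L pl \<le> ell * card (N - F)"
    unfolding N_def F_def using assms(3)
    by (intro c_tilde_le_card_non_fresh lengths) (auto simp: simple_labelling_def)
  with assms(1) have c: "real (c_tilde L pl) / real ell \<le> card (N - F)"
    by (simp add: divide_simps mult.commute flip: of_nat_mult)
  have "card (F \<inter> E) \<le> card (E - F)"
    unfolding E_def F_def using assms(3)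
    by (intro card_fresh_steps_Int_le_Diff) (simp add: simple_labelling_def)
  moreover have partition: "E \<union> N = {..<L}" "E \<inter> N = {}"
    by (auto simp: E_def N_def)
  ultimately have "2 * card F + 2 * card (N - F) \<le> card E + 2 * card N"
    using fresh_steps_subset[of L nl]
    by (intro card_add_card_Diff_le_half) (auto simp: E_def N_def F_def)
  moreover have "card E + card N = L"
    using partition card_Un_disjoint[of E N] by (simp add: E_def N_def)
  ultimately show ?thesis
    using r c unfolding excess_def k_tilde_def N_def[symmetric] add_divide_distrib by linarith
qed

end
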